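(* Let $C$ be a convex subset of a topological vector space and let $f,g:C\to\mathbb{R}$ be continuous functions such that $g$ is convex and non-negative, $0$ belongs to the image of $g$, and $g^{-1}(0)\subseteq f^{-1}(0)$. Let $\lambda\ge 0$ and consider the problem of minimising $g(v)$ over $v\in C$ subject to $f(v)\ge\lambda$. Then every minimiser $v$ of this problem satisfies $f(v)=\lambda$; in other words, the set of minimisers of $g$ over $\{v\in C: f(v)\ge\lambda\}$ coincides with the set of minimisers of $g$ over $\{v\in C: f(v)=\lambda\}$. *)

theory Defs
  imports "HOL-Analysis.Analysis"
begin

text \<open>Real topological vector spaces: a real vector space with a topology in which
  vector addition and scalar multiplication are (jointly) continuous; joint continuity is stated via the
  product of neighbourhood filters, which is the neighbourhood filter of the product topology.\<close>
class topological_real_vector = real_vector + topological_space +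
  assumes tendsto_add_tvs:
    "filterlim (\<lambda>p :: 'a \<times> 'a. fst p + snd p) (nhds (a + b)) (nhds a \<times>\<^sub>F nhds b)"
  assumes tendsto_scaleR_tvs:
    "filterlim (\<lambda>p :: real \<times> 'a. fst p *\<^sub>R snd p) (nhds (c *\<^sub>R a)) (nhds c \<times>\<^sub>F nhds a)"

instance real_normed_vector \<subseteq> topological_real_vector
  proof
  fix a b :: 'a and c :: real
  show "filterlim (\<lambda>p :: 'a \<times> 'a. fst p + snd p) (nhds (a + b)) (nhds a \<times>\<^sub>F nhds b)"
    unfolding nhds_prod[symmetric] using tendsto_fst[OF filterlim_ident, of "(a, b)"] tendsto_snd[OF filterlim_ident, of "(a, b)"]
    by (intro tendsto_intros) simp_all
  show "filterlim (\<lambda>p :: real \<times> 'a. fst p *\<^sub>R snd p) (nhds (c *\<^sub>R a)) (nhds c \<times>\<^sub>F nhds a)"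
    unfolding nhds_prod[symmetric] using tendsto_fst[OF filterlim_ident, of "(c, a)"] tendsto_snd[OF filterlim_ident, of "(c, a)"]
    by (intro tendsto_intros) simp_all
qed

definition argmin_on :: "('a \<Rightarrow> real) \<Rightarrow> 'a set \<Rightarrow> 'a set" where
  "argmin_on g S = {v \<in> S. \<forall>u \<in> S. g v \<le> g u}"

end

theory Submission
  imports Defs
begin

text \<open>Pick a zero \<open>w\<close> of \<open>g\<close> in \<open>C\<close>; then \<open>f w = 0 \<le> \<lambda>\<close>. For any feasible \<open>u\<close>, the intermediate
  value theorem on the segment from \<open>u\<close> to \<open>w\<close> gives a point \<open>(1 - t) u + t w\<close> with \<open>f = \<lambda>\<close>, and
  convexity bounds \<open>g\<close> there by \<open>(1 - t) g u \<le> g u\<close>. So the level set \<open>f = \<lambda>\<close> is as good as the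
  whole feasible set, and a feasible \<open>u\<close> with \<open>f u > \<lambda>\<close> has \<open>t > 0\<close> and \<open>g u > 0\<close> (zeros of \<open>g\<close> have
  \<open>f = 0\<close>), hence is strictly beaten and cannot be a minimiser.\<close>

lemma tvs_tendsto_add:
  fixes X Y :: "'b \<Rightarrow> 'a::topological_real_vector"
  assumes "(X \<longlongrightarrow> a) F" "(Y \<longlongrightarrow> b) F"
  shows "((\<lambda>x. X x + Y x) \<longlongrightarrow> a + b) F"
proof -
  have "filterlim (\<lambda>x. (X x, Y x)) (nhds a \<times>\<^sub>F nhds b) F"
    using tendsto_Pair[OF assms] by (simp add: nhds_prod)
  from filterlim_compose[OF tendsto_add_tvs this] show ?thesis by simp
qed

lemma tvs_tendsto_scaleR:
  fixes Y :: "'b \<Rightarrow> 'a::topological_real_vector"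
  assumes "(X \<longlongrightarrow> c) F" "(Y \<longlongrightarrow> b) F"
  shows "((\<lambda>x. X x *\<^sub>R Y x) \<longlongrightarrow> c *\<^sub>R b) F"
proof -
  have "filterlim (\<lambda>x. (X x, Y x)) (nhds c \<times>\<^sub>F nhds b) F"
    using tendsto_Pair[OF assms] by (simp add: nhds_prod)
  from filterlim_compose[OF tendsto_scaleR_tvs this] show ?thesis by simp
qed

lemma tvs_continuous_on_segment_path:
  fixes u w :: "'a::topological_real_vector"
  shows "continuous_on S (\<lambda>t. (1 - t) *\<^sub>R u + t *\<^sub>R w)"
  unfolding continuous_on_def
  by (intro ballI tvs_tendsto_add tvs_tendsto_scaleR tendsto_diff tendsto_const tendsto_ident_at)

lemma convex_continuous_on_IVT_segment:
  fixes C :: "'a::topological_real_vector set" and f :: "'a \<Rightarrow> real"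
  assumes "convex C" "continuous_on C f" "u \<in> C" "w \<in> C" "f w \<le> lam" "lam \<le> f u"
  obtains t where "0 \<le> t" "t \<le> 1" "f ((1 - t) *\<^sub>R u + t *\<^sub>R w) = lam"
proof -
  let ?p = "\<lambda>t::real. (1 - t) *\<^sub>R u + t *\<^sub>R w"
  have "?p ` {0..1} \<subseteq> C"
    using assms(1,3,4) by (auto simp: convex_def)
  then have "continuous_on {0..1} (f \<circ> ?p)"
    using continuous_on_compose continuous_on_subset[OF assms(2)] tvs_continuous_on_segment_path
    by blast
  then show thesis
    using IVT2'[of "f \<circ> ?p" 1 lam 0] assms(5,6) that by auto
qed

lemma convex_on_level_point_le:
  fixes C :: "'a::topological_real_vector set" and f g :: "'a \<Rightarrow> real"
  assumes "convex C" "continuous_on C f" "convex_on C g"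
    and "w \<in> C" "g w = 0" "f w \<le> lam"
    and "u \<in> C" "lam \<le> f u" "0 \<le> g u"
  obtains x where "x \<in> C" "f x = lam" "g x \<le> g u" "f u \<noteq> lam \<Longrightarrow> 0 < g u \<Longrightarrow> g x < g u"
proof -
  obtain t where t: "0 \<le> t" "t \<le> 1" and level: "f ((1 - t) *\<^sub>R u + t *\<^sub>R w) = lam"
    using convex_continuous_on_IVT_segment[OF assms(1,2,7,4,6,8)] .
  define x where "x = (1 - t) *\<^sub>R u + t *\<^sub>R w"
  have "x \<in> C"
    using assms(1,4,7) t by (simp add: x_def convex_def)
  have "g x \<le> (1 - t) * g u + t * g w"
    unfolding x_def using assms(3,4,7) t by (intro convex_onD) auto
  then have below: "g x \<le> (1 - t) * g u"
    using assms(5) by simp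
  have "t \<noteq> 0" if "f u \<noteq> lam"
    using level that by auto
  then have "(1 - t) * g u < g u" if "f u \<noteq> lam" "0 < g u"
    using t that by (simp add: algebra_simps)
  moreover have "(1 - t) * g u \<le> g u"
    using t assms(9) by (simp add: algebra_simps)
  ultimately show thesis
    using that \<open>x \<in> C\<close> level below x_def by fastforce
qed

lemma argmin_on_eq_if_dominated:
  assumes "T \<subseteq> S" "\<And>u. u \<in> S \<Longrightarrow> \<exists>x \<in> T. g x \<le> g u" "argmin_on g S \<subseteq> T"
  shows "argmin_on g S = argmin_on g T"
proof
  show "argmin_on g S \<subseteq> argmin_on g T"
    using assms(1,3) unfolding argmin_on_def by blast
  show "argmin_on g T \<subseteq> argmin_on g S"
  proof
    fix v assume v: "v \<in> argmin_on g T"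
    have "g v \<le> g u" if "u \<in> S" for u
      using v assms(2)[OF that] unfolding argmin_on_def by force
    then show "v \<in> argmin_on g S"
      using v assms(1) unfolding argmin_on_def by blast
  qed
qed

theorem lemma4:
  fixes C :: "'a::topological_real_vector set"
    and f g :: "'a \<Rightarrow> real"
    and lam :: real
  assumes "convex C"
    and "continuous_on C f"
    and "continuous_on C g"
    and "convex_on C g"
    and "\<And>v. v \<in> C \<Longrightarrow> g v \<ge> 0"
    and "0 \<in> g ` C"
    and "\<And>v. v \<in> C \<Longrightarrow> g v = 0 \<Longrightarrow> f v = 0"
    and "lam \<ge> 0"
  shows "(\<forall>v \<in> argmin_on g {v \<in> C. f v \<ge> lam}. f v = lam)
       \<and> argmin_on g {v \<in> C. f v \<ge> lam} = argmin_on g {v \<in> C. f v = lam}"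
proof -
  obtain w where w: "w \<in> C" "g w = 0" "f w \<le> lam"
    using assms(6-8) by force
  note level_point = convex_on_level_point_le[OF assms(1,2,4) w _ _ assms(5)]
  have on_level: "f v = lam" if v: "v \<in> argmin_on g {v \<in> C. f v \<ge> lam}" for v
  proof (rule ccontr)
    assume "f v \<noteq> lam"
    with v assms(5,7,8) have "0 < g v" "v \<in> C" "lam \<le> f v"
      by (fastforce simp: argmin_on_def)+
    with \<open>f v \<noteq> lam\<close> obtain x where "x \<in> C" "f x = lam" "g x < g v"
      using level_point by metis
    with v show False
      by (fastforce simp: argmin_on_def)
  qed
  have "argmin_on g {v \<in> C. f v \<ge> lam} = argmin_on g {v \<in> C. f v = lam}"
  proof (rule argmin_on_eq_if_dominated)
    show "\<exists>x \<in> {v \<in> C. f v = lam}. g x \<le> g u" if "u \<in> {v \<in> C. f v \<ge> lam}" for u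
      using that level_point by (metis (mono_tags, lifting) mem_Collect_eq)
  qed (use on_level in \<open>auto simp: argmin_on_def\<close>)
  with on_level show ?thesis
    by blast
qed

end
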